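(* Assume the model and the bounded-SNR assumption in the context, and fix $\varepsilon>0$. For a profile $\mathbf a$ and a player $n$ with $a_n\notin B_\varepsilon(\mathbf a_{-n})$, let $k$ be uniformly distributed on $B_{\varepsilon/2}(\mathbf a_{-n})$ and $\mathbf a'=(k,\mathbf a_{-n})$. Then the probability (over the random locations) that for every profile $\mathbf a$ and every player $n$ with $a_n\notin B_\varepsilon(\mathbf a_{-n})$ $$\mathbb E_k\big[X(\mathbf a')-X(\mathbf a)\big]\ge\frac{\varepsilon}{4}$$ tends to $1$ as $N\to\infty$. Consequently, with probability tending to $1$, for every non-degenerate schedule the $\varepsilon$-approximate best-response dynamics satisfy $\mathbb E[X(\mathbf a_{t+1})-X(\mathbf a_t)\mid\mathbf a_t]\ge0$ for all $t\ge0$.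
   Context: Model. Fix constants $\lambda>0$, $\alpha>0$, $G>0$, $\theta_T,\theta_R\in(0,2\pi]$, $P_0>0$, $N_0>0$ and a positive integer $S$. For each $N\ge2$ there are $N$ players $\mathcal N=\{1,\dots,N\}$ and a destination map $d:\mathcal N\to\mathcal N$, fixed independently of the player locations, with $d(n)\ne n$ for all $n$ and with every player being the destination of at most $S$ players. The number of channels is $K=N/l_N$ (an integer), where $l_N\ge1$ and $l_N\left(\frac{\log N}{N}\right)^{\frac{\alpha}{\alpha+2}}\to0$ as $N\to\infty$. The locations $x_1,\dots,x_N$ of the players are i.i.d. uniform on a fixed closed set $\mathcal D\subseteq\mathbb R^2$ of area $1/\lambda$. Each player has a transmit beam of angular width $\theta_T$ and a receive beam of angular width $\theta_R$, with fixed arbitrary orientations. For $i\ne j$, $r_{i,j}=\|x_i-x_j\|$; $\theta_{i,j}$ denotes the angle between the direction from $x_i$ to $x_j$ and the bisector of player $i$'s transmit beam when $i$ acts as transmitter, resp. of player $i$'s receive beam when $i$ acts as receiver. The channel gain from transmitter $m$ to receiver $d(n)$ is $g_{m,d(n)}=G\,r_{m,d(n)}^{-\alpha}\,\mathbf 1\{|\theta_{m,d(n)}|\le\theta_T/2\}\,\mathbf 1\{|\theta_{d(n),m}|\le\theta_R/2\}$ for $m\ne d(n)$ (angle of $m$ w.r.t. its transmit beam, angle of $d(n)$ w.r.t. its receive beam), and $g_{d(n),d(n)}=+\infty$. Player $n$ transmits with power $P_n\in(0,P_{\max}]$, $P_{\max}=P_0\left(\frac{\log N}{N}\right)^{\alpha/2}$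 (the $P_n$ may depend on the locations). Game: each player chooses one channel $a_n\in\{1,\dots,K\}$; $\mathbf a=(a_1,\dots,a_N)$, $\mathbf a_{-n}$ is the profile of the others and $(k,\mathbf a_{-n})$ the profile where $n$ plays $k$. Interference: $I_n(\mathbf a)=\sum_{m\ne n:\,a_m=a_n}g_{m,d(n)}P_m$. Utility: $u_n(\mathbf a)=R_n(\mathbf a)=\log_2\!\big(1+\frac{g_{n,d(n)}P_n}{N_0+I_n(\mathbf a)}\big)$ (equal to $0$ if $I_n(\mathbf a)=\infty$). Sum-rate: $X(\mathbf a)=\sum_{n\in\mathcal N}R_n(\mathbf a)$. For $\varepsilon>0$, $B_\varepsilon(\mathbf a_{-n})=\{k:\ u_n(k,\mathbf a_{-n})+\varepsilon\ge\max_{k'}u_n(k',\mathbf a_{-n})\}$. A profile $\mathbf a$ is an $\varepsilon$-PNE if $a_n\in B_\varepsilon(\mathbf a_{-n})$ for all $n$. All probabilities "over the random game" are with respect to the random locations, and limits are as $N\to\infty$ with all constants fixed. Bounded-SNR assumption: there is a constant $\sigma_{\max}$ (independent of $N$) such that $\sigma_n:=g_{n,d(n)}P_n/N_0\le\sigma_{\max}$ for all $n$. Dynamics ($\varepsilon$-approximate best-response dynamics). Start from an arbitrary profile $\mathbf a_0$. At each step $t$ a set $\mathcal N_t\subseteq\mathcal N$, determined by $t$ and $\mathbf a_t$ (the schedule), is given and an acting player $n$ is drawn uniformly from $\mathcal N_t$. If $a_{n,t}\in B_\varepsilon(\mathbf a_{-n,t})$ then $\mathbf a_{t+1}=\mathbf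 a_t$; otherwise $\mathbf a_{t+1}=(k,\mathbf a_{-n,t})$ with $k$ uniform on $B_{\varepsilon/2}(\mathbf a_{-n,t})$; all random choices are independent given the past. (If $\mathcal N_t=\emptyset$, then $\mathbf a_{t+1}=\mathbf a_t$.) The schedule is non-degenerate if for every $t$ either $\mathcal N_t$ contains some $n$ with $a_{n,t}\notin B_\varepsilon(\mathbf a_{-n,t})$, or $\mathbf a_t$ is an $\varepsilon$-PNE. *)

theory Defs
  imports "HOL-Probability.Probability"
begin

definition vec_angle :: "real \<times> real \<Rightarrow> real \<times> real \<Rightarrow> real" where
  "vec_angle u v = arccos (inner u v / (norm u * norm v))"

text \<open>Beam test: the direction from p to q lies within the beam of angular
 width th whose bisector has direction angle phi (i.e. |theta| <= th/2).\<close>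
definition in_beam :: "real \<Rightarrow> real \<Rightarrow> real \<times> real \<Rightarrow> real \<times> real \<Rightarrow> bool" where
  "in_beam th phi p q \<longleftrightarrow> vec_angle (q - p) (cos phi, sin phi) \<le> th / 2"

text \<open>A realized game: players 0..<nP, channels 1..nK.\<close>
record net =
  nP :: nat
  nK :: nat
  dst :: "nat \<Rightarrow> nat"
  pos :: "nat \<Rightarrow> real \<times> real"
  pw :: "nat \<Rightarrow> real"
  phiT :: "nat \<Rightarrow> real"
  phiR :: "nat \<Rightarrow> real"
  gG :: real
  alph :: real
  thT :: real
  thR :: real
  noise :: real

text \<open>Channel gain from transmitter m to receiver j (for m \<noteq> j and distinct positions).\<close>
definition gain :: "net \<Rightarrow> nat \<Rightarrow> nat \<Rightarrow> real" where
  "gain g m j = gG g * dist (pos g m) (pos g j) powr (- alph g)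
     * (if in_beam (thT g) (phiT g m) (pos g m) (pos g j)
           \<and> in_beam (thR g) (phiR g j) (pos g j) (pos g m) then 1 else 0)"

definition interf :: "net \<Rightarrow> (nat \<Rightarrow> nat) \<Rightarrow> nat \<Rightarrow> real" where
  "interf g a n = (\<Sum>m \<in> {m. m < nP g \<and> m \<noteq> n \<and> a m = a n}. gain g m (dst g n) * pw g m)"

text \<open>Rate; it is 0 when the destination itself transmits on the same channel
 (infinite interference, since g_{d(n),d(n)} = +infinity).\<close>
definition rate :: "net \<Rightarrow> (nat \<Rightarrow> nat) \<Rightarrow> nat \<Rightarrow> real" where
  "rate g a n = (if (\<exists>m < nP g. m \<noteq> n \<and> a m = a n \<and> m = dst g n) then 0
     else log 2 (1 + gain g n (dst g n) * pw g n / (noise g + interf g a n)))"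

definition sumrate :: "net \<Rightarrow> (nat \<Rightarrow> nat) \<Rightarrow> real" where
  "sumrate g a = (\<Sum>n < nP g. rate g a n)"

definition profile :: "net \<Rightarrow> (nat \<Rightarrow> nat) \<Rightarrow> bool" where
  "profile g a \<longleftrightarrow> (\<forall>n < nP g. a n \<in> {1..nK g})"

definition best_set :: "net \<Rightarrow> real \<Rightarrow> (nat \<Rightarrow> nat) \<Rightarrow> nat \<Rightarrow> nat set" where
  "best_set g eps a n = {k \<in> {1..nK g}.
      rate g (a(n := k)) n + eps \<ge> (MAX k' \<in> {1..nK g}. rate g (a(n := k')) n)}"

definition eps_PNE :: "net \<Rightarrow> real \<Rightarrow> (nat \<Rightarrow> nat) \<Rightarrow> bool" where
  "eps_PNE g eps a \<longleftrightarrow> (\<forall>n < nP g. a n \<in> best_set g eps a n)"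

text \<open>Schedules: sched t a is the set N_t, a function of t and a_t.\<close>
definition valid_schedule :: "net \<Rightarrow> (nat \<Rightarrow> (nat \<Rightarrow> nat) \<Rightarrow> nat set) \<Rightarrow> bool" where
  "valid_schedule g sched \<longleftrightarrow> (\<forall>t a. sched t a \<subseteq> {..<nP g})"

definition nondegenerate :: "net \<Rightarrow> real \<Rightarrow> (nat \<Rightarrow> (nat \<Rightarrow> nat) \<Rightarrow> nat set) \<Rightarrow> bool" where
  "nondegenerate g eps sched \<longleftrightarrow> (\<forall>t a. profile g a \<longrightarrow>
      (\<exists>n \<in> sched t a. a n \<notin> best_set g eps a n) \<or> eps_PNE g eps a)"

text \<open>One step of eps-approximate best-response dynamics: the distribution of
 a_{t+1} given t and a_t = a (Markov transition kernel).\<close>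
definition br_step :: "net \<Rightarrow> real \<Rightarrow> (nat \<Rightarrow> (nat \<Rightarrow> nat) \<Rightarrow> nat set) \<Rightarrow> nat
    \<Rightarrow> (nat \<Rightarrow> nat) \<Rightarrow> (nat \<Rightarrow> nat) pmf" where
  "br_step g eps sched t a =
     (if sched t a = {} then return_pmf a
      else pmf_of_set (sched t a) \<bind> (\<lambda>n.
        if a n \<in> best_set g eps a n then return_pmf a
        else pmf_of_set (best_set g (eps / 2) a n) \<bind> (\<lambda>k. return_pmf (a(n := k)))))"

definition mk_net :: "real \<Rightarrow> real \<Rightarrow> real \<Rightarrow> real \<Rightarrow> real \<Rightarrow> nat \<Rightarrow> nat \<Rightarrow> (nat \<Rightarrow> nat)
   \<Rightarrow> (nat \<Rightarrow> real) \<Rightarrow> (nat \<Rightarrow> real) \<Rightarrow> (nat \<Rightarrow> real \<times> real) \<Rightarrow> (nat \<Rightarrow> real) \<Rightarrow> net" where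
  "mk_net G alpha tT tR N0 N K d pT pR x P =
     \<lparr> nP = N, nK = K, dst = d, pos = x, pw = P, phiT = pT, phiR = pR,
       gG = G, alph = alpha, thT = tT, thR = tR, noise = N0 \<rparr>"

end

theory Submission
  imports Defs
begin

text \<open>
  A move of player \<open>n\<close> to a channel \<open>k\<close> of its \<open>eps/2\<close>-best set raises its own rate by more
  than \<open>eps/2\<close>; only the players already on \<open>k\<close> can lose. Such a player loses at most the
  capacity \<open>log 2 (1 + smax)\<close> if its receiver is \<open>n\<close> or lies within distance \<open>r\<close> of \<open>n\<close>
  (at most \<open>S * (1 + T)\<close> players when \<open>n\<close> has \<open>T\<close> neighbours), and otherwise at most the
  first-order far-field loss \<open>G * r powr (-alpha) * Pmax / (N0 * ln 2)\<close>. The best set misses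
  only the channels of the receiver of \<open>n\<close>, of its neighbours, and of the few heavily loaded
  channels, so it contains at least half of the \<open>K\<close> channels; averaging over it, every player
  is charged at most once, and the expected total loss is at most \<open>2/K\<close> times the budget above.
  With \<open>r^2 = (ln N / N)^(alpha/(alpha+2))\<close> both the neighbour count \<open>T = O(N r^2)\<close> and the
  far-field term are \<open>O(N r^2)\<close>, so the loss is below \<open>eps/4\<close> once \<open>l N * r^2\<close> is small.
  The configurations violating the geometric hypotheses (positions outside \<open>D\<close>, coinciding
  positions, more than \<open>T\<close> neighbours) have probability at most \<open>1/N\<close>, the last by a Chernoff
  bound. Nonnegative drift of the dynamics follows, since a step is either void or such a move.
\<close>

section \<open>Best-response moves in an interference game\<close>

lemma log2_one_plus_div_mono:
  fixes s A B :: real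
  assumes "s \<ge> 0" "0 < A" "A \<le> B"
  shows "log 2 (1 + s / B) \<le> log 2 (1 + s / A)"
proof -
  have "s / B \<le> s / A" using assms by (intro divide_left_mono) auto
  moreover have "0 \<le> s / B" using assms by simp
  ultimately show ?thesis by (subst log_le_cancel_iff) auto
qed

lemma log2_one_plus_div_diff_le:
  fixes A s D :: real
  assumes "A > 0" "s \<ge> 0" "D \<ge> 0"
  shows "log 2 (1 + s / A) - log 2 (1 + s / (A + D)) \<le> D / (A * ln 2)"
proof -
  define q where "q = ((A + s) * (A + D)) / (A * (A + D + s))"
  have pos: "A * (A + D + s) > 0" using assms by simp
  have q_pos: "q > 0" unfolding q_def using assms pos by simp
  have p1: "1 + s / A > 0" and p2: "1 + s / (A + D) > 0" using assms by (auto intro: add_pos_nonneg)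
  have q_eq: "(1 + s / A) / (1 + s / (A + D)) = q"
    unfolding q_def using assms by (simp add: field_simps)
  have "log 2 (1 + s / A) - log 2 (1 + s / (A + D)) = log 2 q"
    unfolding q_eq[symmetric] using p1 p2 by (simp add: log_divide)
  also have "\<dots> = ln q / ln 2" by (simp add: log_def)
  also have "ln q \<le> q - 1" using q_pos by (rule ln_le_minus_one)
  also have "q - 1 = (D / A) * (s / (A + D + s))"
    unfolding q_def using pos by (simp add: field_simps)
  also have "\<dots> \<le> D / A" using assms by (intro mult_left_le) auto
  finally show ?thesis by (simp add: divide_right_mono)
qed

lemma card_preimage_eq_sum_fibres:
  assumes "finite A" "finite F"
  shows "card {m\<in>A. h m \<in> F} = (\<Sum>k\<in>F. card {m\<in>A. h m = k})"
proof -
  have "{m\<in>A. h m \<in> F} = (\<Union>k\<in>F. {m\<in>A. h m = k})" by auto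
  then show ?thesis using assms by (simp only:) (rule card_UN_disjoint, auto)
qed

lemma card_above_mult_le_sum:
  fixes f :: "'a \<Rightarrow> real"
  assumes "finite F" "\<And>k. k \<in> F \<Longrightarrow> f k \<ge> 0"
  shows "real (card {k\<in>F. t < f k}) * t \<le> (\<Sum>k\<in>F. f k)"
proof -
  have "real (card {k\<in>F. t < f k}) * t = (\<Sum>k\<in>{k\<in>F. t < f k}. t)" by simp
  also have "\<dots> \<le> (\<Sum>k\<in>{k\<in>F. t < f k}. f k)" by (intro sum_mono) auto
  also have "\<dots> \<le> (\<Sum>k\<in>F. f k)" using assms by (intro sum_mono2) auto
  finally show ?thesis .
qed

lemma best_set_half_rate_gain:
  assumes "a n \<in> {1..nK g}" "a n \<notin> best_set g eps a n" "k \<in> best_set g (eps / 2) a n"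
  shows "rate g (a(n := k)) n - rate g a n > eps / 2"
  using assms unfolding best_set_def by auto

lemma best_set_nonempty:
  assumes "profile g a" "n < nP g" "eps \<ge> 0"
  shows "best_set g eps a n \<noteq> {}"
proof -
  have K: "{1..nK g} \<noteq> {}" using assms unfolding profile_def by auto
  obtain k where k: "k \<in> {1..nK g}"
    "rate g (a(n := k)) n = (MAX k' \<in> {1..nK g}. rate g (a(n := k')) n)"
    using Max_in[of "(\<lambda>k'. rate g (a(n := k')) n) ` {1..nK g}"] K by fastforce
  then have "(MAX k' \<in> {1..nK g}. rate g (a(n := k')) n) \<le> rate g (a(n := k)) n + eps"
    using assms(3) by linarith
  then have "k \<in> best_set g eps a n" unfolding best_set_def using k(1) by blast
  then show ?thesis by auto
qed

lemma finite_best_set: "finite (best_set g eps a n)"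
  unfolding best_set_def by simp

definition neighbours :: "net \<Rightarrow> real \<Rightarrow> nat \<Rightarrow> nat set" where
  "neighbours g R j = {i. i < nP g \<and> i \<noteq> j \<and> dist (pos g i) (pos g j) < R}"

locale interference_game =
  fixes g :: net
  assumes noise_pos: "noise g > 0"
    and dst_valid: "\<And>m. m < nP g \<Longrightarrow> dst g m < nP g \<and> dst g m \<noteq> m"
    and pw_pos: "\<And>m. m < nP g \<Longrightarrow> pw g m > 0"
    and gain_nonneg: "\<And>m j. gain g m j \<ge> 0"
begin

lemma interf_nonneg: "interf g a m \<ge> 0"
  unfolding interf_def using gain_nonneg pw_pos by (intro sum_nonneg) (simp add: less_imp_le)

lemma signal_nonneg: "m < nP g \<Longrightarrow> gain g m (dst g m) * pw g m \<ge> 0"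
  using gain_nonneg pw_pos by (simp add: less_imp_le)

lemma rate_eq:
  assumes "m < nP g"
  shows "rate g a m = (if a (dst g m) = a m then 0
     else log 2 (1 + gain g m (dst g m) * pw g m / (noise g + interf g a m)))"
  using dst_valid[OF assms] unfolding rate_def by auto

lemma rate_nonneg:
  assumes "m < nP g" shows "rate g a m \<ge> 0"
proof -
  have "0 \<le> gain g m (dst g m) * pw g m / (noise g + interf g a m)"
    using signal_nonneg[OF assms] noise_pos interf_nonneg[of a m] by simp
  then show ?thesis unfolding rate_eq[OF assms] by simp
qed

lemma rate_le_isolated:
  assumes "m < nP g"
  shows "rate g a m \<le> log 2 (1 + gain g m (dst g m) * pw g m / noise g)"
  using log2_one_plus_div_mono[OF signal_nonneg[OF assms] noise_pos] interf_nonneg[of a m]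
    divide_nonneg_pos[OF signal_nonneg[OF assms] noise_pos]
  unfolding rate_eq[OF assms] by simp

lemma interf_fun_upd_le:
  assumes "m \<noteq> n" "a m \<noteq> k"
  shows "interf g (a(n := k)) m \<le> interf g a m"
  unfolding interf_def using assms gain_nonneg pw_pos
  by (intro sum_mono2) (auto simp: less_imp_le)

lemma interf_fun_upd_join:
  assumes "n < nP g" "m \<noteq> n" "a m = k" "a n \<noteq> k"
  shows "interf g (a(n := k)) m = interf g a m + gain g n (dst g m) * pw g n"
proof -
  have "{m'. m' < nP g \<and> m' \<noteq> m \<and> (a(n := k)) m' = (a(n := k)) m}
      = insert n {m'. m' < nP g \<and> m' \<noteq> m \<and> a m' = a m}"
    using assms by auto
  then show ?thesis unfolding interf_def using assms by simp
qed

lemma rate_fun_upd_ge: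
  assumes "m < nP g" "m \<noteq> n" "a m \<noteq> k"
  shows "rate g a m \<le> rate g (a(n := k)) m"
proof (cases "a (dst g m) = a m")
  case True
  then have "rate g a m = 0" unfolding rate_eq[OF assms(1)] by simp
  then show ?thesis using rate_nonneg[OF assms(1)] by simp
next
  case False
  then have "(a(n := k)) (dst g m) \<noteq> (a(n := k)) m" using assms by auto
  moreover have "noise g + interf g (a(n := k)) m \<le> noise g + interf g a m"
    using interf_fun_upd_le[of m n a k] assms by simp
  then have "log 2 (1 + gain g m (dst g m) * pw g m / (noise g + interf g a m))
      \<le> log 2 (1 + gain g m (dst g m) * pw g m / (noise g + interf g (a(n := k)) m))"
    using noise_pos interf_nonneg by (intro log2_one_plus_div_mono signal_nonneg assms) (auto intro: add_pos_nonneg)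
  ultimately show ?thesis using False assms unfolding rate_eq[OF assms(1)] by auto
qed

lemma rate_fun_upd_loss_le:
  assumes "m < nP g" "n < nP g" "m \<noteq> n" "a m = k" "a n \<noteq> k" "dst g m \<noteq> n"
  shows "rate g a m - rate g (a(n := k)) m \<le> gain g n (dst g m) * pw g n / (noise g * ln 2)"
proof (cases "a (dst g m) = a m")
  case True
  then show ?thesis using assms gain_nonneg[of n "dst g m"] pw_pos[OF assms(2)] noise_pos
    unfolding rate_eq[OF assms(1)] by simp
next
  case False
  let ?I = "noise g + interf g a m"
  let ?D = "gain g n (dst g m) * pw g n"
  have I: "?I > 0" using noise_pos interf_nonneg by (auto intro: add_pos_nonneg)
  have D: "?D \<ge> 0" using gain_nonneg pw_pos[OF assms(2)] by simp
  have "rate g a m - rate g (a(n := k)) m =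
      log 2 (1 + gain g m (dst g m) * pw g m / ?I)
      - log 2 (1 + gain g m (dst g m) * pw g m / (?I + ?D))"
    using False assms interf_fun_upd_join[OF assms(2-5)]
    unfolding rate_eq[OF assms(1)] by (simp add: add.assoc)
  also have "\<dots> \<le> ?D / (?I * ln 2)"
    by (rule log2_one_plus_div_diff_le[OF I signal_nonneg[OF assms(1)] D])
  also have "\<dots> \<le> ?D / (noise g * ln 2)"
    using D interf_nonneg[of a m] noise_pos
    by (intro divide_left_mono mult_right_mono mult_pos_pos add_pos_nonneg) auto
  finally show ?thesis .
qed

text \<open>The mover's own rate is within \<open>eps/2\<close> of the interference-free rate
  \<open>log 2 (1 + s / noise)\<close>, which dominates every achievable rate, as soon as the
  interference it meets is at most \<open>eps * noise * ln 2 / 2\<close>.\<close>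

lemma best_set_of_low_interf:
  assumes "n < nP g" "k \<in> {1..nK g}" "a (dst g n) \<noteq> k"
    and low: "interf g (a(n := k)) n \<le> eps * noise g * ln 2 / 2"
  shows "k \<in> best_set g (eps / 2) a n"
proof -
  let ?s = "gain g n (dst g n) * pw g n"
  have "log 2 (1 + ?s / noise g) - rate g (a(n := k)) n
      \<le> interf g (a(n := k)) n / (noise g * ln 2)"
    using assms dst_valid[OF assms(1)] unfolding rate_eq[OF assms(1)]
    by (simp add: log2_one_plus_div_diff_le noise_pos signal_nonneg interf_nonneg)
  also have "\<dots> \<le> eps / 2"
    using low noise_pos by (simp add: divide_le_eq mult.commute)
  finally have iso: "log 2 (1 + ?s / noise g) \<le> rate g (a(n := k)) n + eps / 2" by simp
  have "(MAX k'\<in>{1..nK g}. rate g (a(n := k')) n) \<le> rate g (a(n := k)) n + eps / 2"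
    using assms(2) by (subst Max_le_iff) (auto intro: order_trans[OF rate_le_isolated[OF assms(1)] iso])
  then show ?thesis unfolding best_set_def using assms(2) by blast
qed

end

locale sparse_game = interference_game +
  fixes S :: nat and Pm smax R T W :: real
  assumes gain_self: "\<And>j. gain g j j = 0"
    and dst_fibre_card_le: "\<And>j. j < nP g \<Longrightarrow> card {m. m < nP g \<and> dst g m = j} \<le> S"
    and pw_le: "\<And>m. m < nP g \<Longrightarrow> pw g m \<le> Pm"
    and snr_le: "\<And>m. m < nP g \<Longrightarrow> gain g m (dst g m) * pw g m / noise g \<le> smax"
    and neighbours_card_le: "\<And>j. j < nP g \<Longrightarrow> real (card (neighbours g R j)) \<le> T"
    and gain_far_le: "\<And>m j. m < nP g \<Longrightarrow> j < nP g \<Longrightarrow> R \<le> dist (pos g m) (pos g j) \<Longrightarrow> gain g m j \<le> W"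
    and W_nonneg: "W \<ge> 0"
begin

lemma rate_isolated_le_cap:
  assumes "m < nP g"
  shows "log 2 (1 + gain g m (dst g m) * pw g m / noise g) \<le> log 2 (1 + smax)"
  using snr_le[OF assms] divide_nonneg_pos[OF signal_nonneg[OF assms] noise_pos] by simp

lemma cap_nonneg: "m < nP g \<Longrightarrow> 0 \<le> log 2 (1 + smax)"
  by (meson order_trans rate_nonneg rate_le_isolated rate_isolated_le_cap)

lemma Pm_nonneg: "m < nP g \<Longrightarrow> 0 \<le> Pm"
  by (meson less_imp_le order_trans pw_pos pw_le)

lemma received_power_le:
  assumes "m < nP g" "j < nP g" "m = j \<or> R \<le> dist (pos g m) (pos g j)"
  shows "gain g m j * pw g m \<le> W * Pm"
proof -
  have "gain g m j \<le> W" using assms gain_self gain_far_le W_nonneg by auto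
  then show ?thesis
    using gain_nonneg pw_pos[OF assms(1)] pw_le[OF assms(1)] W_nonneg by (intro mult_mono) auto
qed

lemma finite_neighbours: "finite (neighbours g R j)"
  unfolding neighbours_def by simp

lemma interf_fun_upd_le_crowd:
  assumes "n < nP g" "k \<notin> a ` neighbours g R (dst g n)"
  shows "interf g (a(n := k)) n \<le> W * Pm * card {m\<in>{..<nP g}. a m = k}"
proof -
  let ?F = "{m. m < nP g \<and> m \<noteq> n \<and> (a(n := k)) m = (a(n := k)) n}"
  have "interf g (a(n := k)) n \<le> (\<Sum>m\<in>?F. W * Pm)"
    unfolding interf_def
  proof (rule sum_mono)
    fix m assume m: "m \<in> ?F"
    then have "m = dst g n \<or> R \<le> dist (pos g m) (pos g (dst g n))"
      using assms(2) unfolding neighbours_def by (force simp: not_less)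
    then show "gain g m (dst g n) * pw g m \<le> W * Pm"
      using m dst_valid[OF assms(1)] by (intro received_power_le) auto
  qed
  also have "\<dots> = W * Pm * card ?F" by simp
  also have "\<dots> \<le> W * Pm * card {m\<in>{..<nP g}. a m = k}"
    using W_nonneg Pm_nonneg[OF assms(1)] by (intro mult_left_mono of_nat_mono card_mono) auto
  finally show ?thesis .
qed

lemma card_crowded_channels_le:
  assumes "0 < tau" "0 < nP g"
  shows "real (card {k\<in>{1..nK g}. tau < W * Pm * card {m\<in>{..<nP g}. a m = k}})
    \<le> real (nP g) * W * Pm / tau"
proof -
  define cnt where "cnt k = card {m\<in>{..<nP g}. a m = k}" for k
  have "(\<Sum>k\<in>{1..nK g}. cnt k) = card {m\<in>{..<nP g}. a m \<in> {1..nK g}}"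
    unfolding cnt_def by (rule card_preimage_eq_sum_fibres[symmetric]) auto
  also have "\<dots> \<le> nP g" by (rule card_mono[of "{..<nP g}", simplified]) auto
  finally have cnt_sum: "(\<Sum>k\<in>{1..nK g}. real (cnt k)) \<le> real (nP g)"
    by (simp only: of_nat_sum[symmetric] of_nat_le_iff)
  have WPm: "0 \<le> W * Pm" using W_nonneg Pm_nonneg[OF assms(2)] by simp
  have "real (card {k\<in>{1..nK g}. tau < W * Pm * cnt k}) * tau \<le> (\<Sum>k\<in>{1..nK g}. W * Pm * real (cnt k))"
    using WPm by (intro card_above_mult_le_sum) auto
  also have "\<dots> = W * Pm * (\<Sum>k\<in>{1..nK g}. real (cnt k))" by (simp add: sum_distrib_left)
  also have "\<dots> \<le> W * Pm * real (nP g)" using cnt_sum WPm by (rule mult_left_mono)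
  finally show ?thesis using assms(1) unfolding cnt_def by (simp add: pos_le_divide_eq mult_ac)
qed

text \<open>A channel is outside the \<open>eps/2\<close>-best set only if it is used by the mover's receiver,
  by one of its neighbours, or by so many players that their far-field interference
  exceeds the threshold of \<open>best_set_of_low_interf\<close>.\<close>

lemma card_not_best_set_le:
  assumes "n < nP g" "eps > 0"
  shows "real (card ({1..nK g} - best_set g (eps / 2) a n))
    \<le> 1 + T + real (nP g) * W * Pm / (eps * noise g * ln 2 / 2)"
proof -
  define tau where "tau = eps * noise g * ln 2 / 2"
  define H where "H = {k\<in>{1..nK g}. tau < W * Pm * card {m\<in>{..<nP g}. a m = k}}"
  let ?nb = "neighbours g R (dst g n)"
  have "{1..nK g} - best_set g (eps / 2) a n \<subseteq> {a (dst g n)} \<union> a ` ?nb \<union> H"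
  proof
    fix k assume k: "k \<in> {1..nK g} - best_set g (eps / 2) a n"
    show "k \<in> {a (dst g n)} \<union> a ` ?nb \<union> H"
    proof (rule ccontr)
      assume "k \<notin> {a (dst g n)} \<union> a ` ?nb \<union> H"
      then have "a (dst g n) \<noteq> k" "interf g (a(n := k)) n \<le> tau"
        using k interf_fun_upd_le_crowd[OF assms(1), of k a] unfolding H_def by auto
      then show False using k best_set_of_low_interf[OF assms(1)] unfolding tau_def by blast
    qed
  qed
  then have "card ({1..nK g} - best_set g (eps / 2) a n) \<le> card ({a (dst g n)} \<union> a ` ?nb \<union> H)"
    by (intro card_mono) (auto simp: finite_neighbours H_def)
  moreover have "card {a (dst g n)} = 1" by simp
  moreover have "card ({a (dst g n)} \<union> a ` ?nb \<union> H) \<le> 1 + card ?nb + card H"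
    using \<open>card {a (dst g n)} = 1\<close> card_Un_le[of "{a (dst g n)} \<union> a ` ?nb" H]
      card_Un_le[of "{a (dst g n)}" "a ` ?nb"] card_image_le[OF finite_neighbours[of "dst g n"], of a]
    by linarith
  ultimately have "real (card ({1..nK g} - best_set g (eps / 2) a n)) \<le> real (1 + card ?nb + card H)"
    by (intro of_nat_mono) simp
  moreover have "real (card ?nb) \<le> T" using neighbours_card_le dst_valid[OF assms(1)] by blast
  moreover have "real (card H) \<le> real (nP g) * W * Pm / tau"
    unfolding H_def using assms noise_pos by (intro card_crowded_channels_le) (auto simp: tau_def)
  ultimately show ?thesis unfolding tau_def by simp
qed

lemma card_best_set_ge:
  assumes "n < nP g" "eps > 0"
    and budget: "1 + T + real (nP g) * W * Pm / (eps * noise g * ln 2 / 2) \<le> real (nK g) / 2"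
  shows "real (card (best_set g (eps / 2) a n)) \<ge> real (nK g) / 2"
proof -
  have "best_set g (eps / 2) a n \<subseteq> {1..nK g}" unfolding best_set_def by auto
  then have "card {1..nK g} = card (best_set g (eps / 2) a n) + card ({1..nK g} - best_set g (eps / 2) a n)"
    by (metis card_Diff_subset card_mono finite_atLeastAtMost le_add_diff_inverse finite_subset)
  then show ?thesis using card_not_best_set_le[OF assms(1,2), of a] budget by simp
qed

text \<open>Bounds the rate that player \<open>m\<close> loses when the mover \<open>n\<close> joins its channel.\<close>

definition loss_bound :: "nat \<Rightarrow> nat \<Rightarrow> real" where
  "loss_bound n m = (if dst g m = n \<or> dist (pos g n) (pos g (dst g m)) < R then log 2 (1 + smax)
     else W * Pm / (noise g * ln 2))"

lemma loss_bound_nonneg: "m < nP g \<Longrightarrow> 0 \<le> loss_bound n m"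
  unfolding loss_bound_def using cap_nonneg Pm_nonneg W_nonneg noise_pos by simp

lemma rate_fun_upd_loss_le_loss_bound:
  assumes "m < nP g" "n < nP g" "m \<noteq> n" "a m = k" "a n \<noteq> k"
  shows "rate g a m - rate g (a(n := k)) m \<le> loss_bound n m"
proof (cases "dst g m = n \<or> dist (pos g n) (pos g (dst g m)) < R")
  case True
  then show ?thesis unfolding loss_bound_def
    using rate_le_isolated[OF assms(1), of a] rate_isolated_le_cap[OF assms(1)]
      rate_nonneg[OF assms(1), of "a(n := k)"] by simp
next
  case False
  then have "gain g n (dst g m) * pw g n \<le> W * Pm"
    using assms dst_valid by (intro received_power_le) auto
  then have "gain g n (dst g m) * pw g n / (noise g * ln 2) \<le> W * Pm / (noise g * ln 2)"
    using noise_pos by (intro divide_right_mono) auto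
  then show ?thesis using False rate_fun_upd_loss_le[OF assms] unfolding loss_bound_def by simp
qed

lemma sumrate_fun_upd_ge:
  assumes "eps > 0" "n < nP g" "a n \<in> {1..nK g}" "a n \<notin> best_set g eps a n"
    and k: "k \<in> best_set g (eps / 2) a n"
  shows "sumrate g (a(n := k)) - sumrate g a
    \<ge> eps / 2 - (\<Sum>m\<in>{m. m < nP g \<and> m \<noteq> n \<and> a m = k}. loss_bound n m)"
proof -
  let ?F = "{m. m < nP g \<and> m \<noteq> n \<and> a m = k}"
  have own: "rate g (a(n := k)) n - rate g a n > eps / 2"
    by (rule best_set_half_rate_gain[OF assms(3,4) k])
  then have "k \<noteq> a n" using assms(1) by auto
  then have "(if m = n then eps / 2 else 0) - (if m \<in> ?F then loss_bound n m else 0)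
      \<le> rate g (a(n := k)) m - rate g a m" if "m < nP g" for m
    using that own rate_fun_upd_ge[OF that, of n a k]
      rate_fun_upd_loss_le_loss_bound[OF that assms(2), of a k] by auto
  then have "(\<Sum>m<nP g. (if m = n then eps / 2 else 0) - (if m \<in> ?F then loss_bound n m else 0))
      \<le> (\<Sum>m<nP g. rate g (a(n := k)) m - rate g a m)"
    by (intro sum_mono) auto
  moreover have "(\<Sum>m<nP g. if m \<in> ?F then loss_bound n m else 0) = sum (loss_bound n) ?F"
    by (subst sum.inter_restrict[symmetric]) (auto intro: sum.cong)
  ultimately show ?thesis using assms(2) by (simp add: sumrate_def sum_subtractf)
qed

lemma sum_loss_bound_le:
  assumes "n < nP g"
  shows "(\<Sum>m<nP g. loss_bound n m)
    \<le> real S * log 2 (1 + smax) + real S * log 2 (1 + smax) * T + real (nP g) * W * Pm / (noise g * ln 2)"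
proof -
  let ?c = "log 2 (1 + smax)" and ?e = "W * Pm / (noise g * ln 2)" and ?nb = "neighbours g R n"
  have c: "0 \<le> ?c" by (rule cap_nonneg[OF assms])
  have "loss_bound n m \<le> ?c * of_bool (dst g m = n) + ?c * of_bool (dst g m \<in> ?nb) + ?e"
    if "m < nP g" for m
    using that c dst_valid[OF that] W_nonneg Pm_nonneg[OF that] noise_pos
    unfolding loss_bound_def neighbours_def by (auto simp: dist_commute)
  then have "(\<Sum>m<nP g. loss_bound n m)
      \<le> (\<Sum>m<nP g. ?c * of_bool (dst g m = n) + ?c * of_bool (dst g m \<in> ?nb) + ?e)"
    by (intro sum_mono) auto
  also have "\<dots> = ?c * card {m. m < nP g \<and> dst g m = n} + ?c * card {m\<in>{..<nP g}. dst g m \<in> ?nb}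
      + real (nP g) * ?e"
    by (simp add: sum.distrib sum_distrib_left[symmetric] Int_def conj_commute)
  finally have L: "(\<Sum>m<nP g. loss_bound n m) \<le> ?c * card {m. m < nP g \<and> dst g m = n}
      + ?c * card {m\<in>{..<nP g}. dst g m \<in> ?nb} + real (nP g) * ?e" .
  have "card {m\<in>{..<nP g}. dst g m = j} \<le> S" if "j \<in> ?nb" for j
    using dst_fibre_card_le[of j] that unfolding neighbours_def by simp
  then have "(\<Sum>j\<in>?nb. card {m\<in>{..<nP g}. dst g m = j}) \<le> card ?nb * S"
    using sum_bounded_above[of ?nb "\<lambda>j. card {m\<in>{..<nP g}. dst g m = j}" S] by simp
  then have "card {m\<in>{..<nP g}. dst g m \<in> ?nb} \<le> card ?nb * S"
    using card_preimage_eq_sum_fibres[of "{..<nP g}" ?nb "dst g"] finite_neighbours by simp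
  then have "real (card {m\<in>{..<nP g}. dst g m \<in> ?nb}) \<le> real (card ?nb) * real S"
    by (metis of_nat_mono of_nat_mult)
  also have "\<dots> \<le> T * real S" using neighbours_card_le[OF assms] by (rule mult_right_mono) simp
  finally have "?c * card {m\<in>{..<nP g}. dst g m \<in> ?nb} \<le> ?c * (T * real S)"
    using c by (rule mult_left_mono)
  moreover have "?c * card {m. m < nP g \<and> dst g m = n} \<le> ?c * real S"
    using c dst_fibre_card_le[OF assms] by (intro mult_left_mono) auto
  ultimately show ?thesis using L by (simp add: algebra_simps)
qed

text \<open>Averaging \<open>sumrate_fun_upd_ge\<close> over the \<open>eps/2\<close>-best set, each player is
  charged for at most one channel, so the total loss is divided by \<open>card B \<ge> nK g / 2\<close>.\<close>

theorem expected_sumrate_gain_ge: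
  assumes eps: "eps > 0"
    and budget_channels: "1 + T + real (nP g) * W * Pm / (eps * noise g * ln 2 / 2) \<le> real (nK g) / 2"
    and budget_loss: "real S * log 2 (1 + smax) + real S * log 2 (1 + smax) * T
      + real (nP g) * W * Pm / (noise g * ln 2) \<le> (real (nK g) / 2) * (eps / 4)"
    and a: "profile g a" and n: "n < nP g" and not_best: "a n \<notin> best_set g eps a n"
  shows "measure_pmf.expectation (pmf_of_set (best_set g (eps / 2) a n))
      (\<lambda>k. sumrate g (a(n := k)) - sumrate g a) \<ge> eps / 4"
proof -
  define B where "B = best_set g (eps / 2) a n"
  define F where "F k = {m. m < nP g \<and> m \<noteq> n \<and> a m = k}" for k
  define Ltot where "Ltot = (\<Sum>m<nP g. loss_bound n m)"
  have an: "a n \<in> {1..nK g}" using a n unfolding profile_def by auto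
  have cardB: "real (card B) \<ge> real (nK g) / 2"
    unfolding B_def by (rule card_best_set_ge[OF n eps budget_channels])
  have B: "finite B" "B \<noteq> {}"
    unfolding B_def using best_set_nonempty[OF a n] eps finite_best_set by auto
  then have cardB_pos: "real (card B) > 0" by (simp add: card_gt_0_iff)
  have "(\<Sum>k\<in>B. sum (loss_bound n) (F k)) = sum (loss_bound n) (\<Union>k\<in>B. F k)"
    using B by (intro sum.UNION_disjoint[symmetric]) (auto simp: F_def)
  also have "\<dots> \<le> Ltot"
    unfolding Ltot_def using loss_bound_nonneg by (intro sum_mono2) (auto simp: F_def)
  also have "\<dots> \<le> real (card B) * (eps / 4)"
    using sum_loss_bound_le[OF n] budget_loss mult_right_mono[OF cardB, of "eps / 4"] eps
    unfolding Ltot_def by linarith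
  finally have "(\<Sum>k\<in>B. eps / 2 - sum (loss_bound n) (F k)) \<ge> real (card B) * (eps / 4)"
    by (simp add: sum_subtractf mult.commute)
  also have "(\<Sum>k\<in>B. eps / 2 - sum (loss_bound n) (F k))
      \<le> (\<Sum>k\<in>B. sumrate g (a(n := k)) - sumrate g a)"
    using sumrate_fun_upd_ge[OF eps n an not_best] unfolding B_def F_def by (intro sum_mono) auto
  finally have "real (card B) * (eps / 4) \<le> (\<Sum>k\<in>B. sumrate g (a(n := k)) - sumrate g a)" .
  then have "eps / 4 \<le> (\<Sum>k\<in>B. sumrate g (a(n := k)) - sumrate g a) / real (card B)"
    using cardB_pos by (metis mult.commute pos_le_divide_eq)
  then show ?thesis using B unfolding B_def[symmetric] by (simp add: integral_pmf_of_set)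
qed

end

theorem br_step_drift_nonneg:
  assumes improve: "\<And>n. n < nP g \<Longrightarrow> a n \<notin> best_set g eps a n \<Longrightarrow>
      measure_pmf.expectation (pmf_of_set (best_set g (eps / 2) a n))
        (\<lambda>k. sumrate g (a(n := k)) - sumrate g a) \<ge> eps / 4"
    and eps: "eps > 0" and sched: "valid_schedule g sched" and a: "profile g a"
  shows "measure_pmf.expectation (br_step g eps sched t a) (\<lambda>a'. sumrate g a' - sumrate g a) \<ge> 0"
proof (cases "sched t a = {}")
  case True
  then show ?thesis by (simp add: br_step_def)
next
  case False
  define f where "f n = (if a n \<in> best_set g eps a n then return_pmf a
    else pmf_of_set (best_set g (eps / 2) a n) \<bind> (\<lambda>k. return_pmf (a(n := k))))" for n
  have A: "sched t a \<subseteq> {..<nP g}" using sched by (simp add: valid_schedule_def)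
  then have fin: "finite (sched t a)" by (rule finite_subset) simp
  have "finite (set_pmf (f n)) \<and> 0 \<le> measure_pmf.expectation (f n) (\<lambda>a'. sumrate g a' - sumrate g a)"
    if "n \<in> sched t a" for n
  proof (cases "a n \<in> best_set g eps a n")
    case False
    have "n < nP g" using that A by auto
    then have "best_set g (eps / 2) a n \<noteq> {}" using best_set_nonempty[OF a] eps by simp
    then show ?thesis using False improve[OF \<open>n < nP g\<close> False] eps finite_best_set
      by (simp add: f_def map_pmf_def[symmetric])
  qed (simp add: f_def)
  moreover have "br_step g eps sched t a = pmf_of_set (sched t a) \<bind> f"
    using False by (simp add: br_step_def f_def[abs_def])
  ultimately show ?thesis
    using False fin by (simp add: pmf_expectation_bind_pmf_of_set sum_nonneg)
qed

section \<open>Uniformly random positions\<close>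

lemma nn_integral_PiM_star:
  fixes \<mu> :: "'a measure" and I :: "'i set"
  assumes "prob_space \<mu>" "space \<mu> = UNIV" "finite I" "j \<notin> I"
    and f: "\<And>i. i \<in> I \<Longrightarrow> case_prod (f i) \<in> borel_measurable (\<mu> \<Otimes>\<^sub>M \<mu>)"
  shows "(\<integral>\<^sup>+x. (\<Prod>i\<in>I. f i (x i) (x j)) \<partial>PiM (insert j I) (\<lambda>_. \<mu>))
       = (\<integral>\<^sup>+y. (\<Prod>i\<in>I. \<integral>\<^sup>+z. f i z y \<partial>\<mu>) \<partial>\<mu>)"
proof -
  interpret prob_space \<mu> by fact
  interpret P: product_sigma_finite "\<lambda>_. \<mu>"
    by (intro product_sigma_finite.intro) (simp add: sigma_finite_measure_axioms)
  have f1: "(\<lambda>z. f i z y) \<in> borel_measurable \<mu>" if "i \<in> I" for i y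
    using measurable_compose[OF _ f[OF that], of "\<lambda>z. (z, y)"] assms(2) by (simp add: measurable_Pair)
  have f2: "(\<lambda>x. f i (x i) (x j)) \<in> borel_measurable (PiM J (\<lambda>_. \<mu>))"
    if "i \<in> I" "i \<in> J" "j \<in> J" for i J
    using measurable_compose[OF _ f[OF that(1)], of "\<lambda>x. (x i, x j)"] that by simp
  have "(\<integral>\<^sup>+x. (\<Prod>i\<in>I. f i (x i) (x j)) \<partial>PiM (insert j I) (\<lambda>_. \<mu>))
     = (\<integral>\<^sup>+y. (\<integral>\<^sup>+x. (\<Prod>i\<in>I. f i ((x(j := y)) i) ((x(j := y)) j)) \<partial>PiM I (\<lambda>_. \<mu>)) \<partial>\<mu>)"
    using assms f2 by (intro P.product_nn_integral_insert_rev borel_measurable_prod_ennreal) auto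
  also have "\<dots> = (\<integral>\<^sup>+y. (\<integral>\<^sup>+x. (\<Prod>i\<in>I. f i (x i) y) \<partial>PiM I (\<lambda>_. \<mu>)) \<partial>\<mu>)"
    using assms(4) by (intro nn_integral_cong prod.cong) auto
  also have "\<dots> = (\<integral>\<^sup>+y. (\<Prod>i\<in>I. \<integral>\<^sup>+z. f i z y \<partial>\<mu>) \<partial>\<mu>)"
    using assms(3) f1 by (intro nn_integral_cong P.product_nn_integral_prod) auto
  finally show ?thesis .
qed

lemma real_card_filter_eq_sum:
  "finite I \<Longrightarrow> real (card {i\<in>I. P i}) = (\<Sum>i\<in>I. of_bool (P i))"
  by (simp add: Int_def)

lemma emeasure_lborel_ball_le:
  fixes y :: "real \<times> real"
  assumes "R \<ge> 0"
  shows "emeasure lborel {z. dist z y < R} \<le> ennreal (4 * R^2)"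
proof -
  have "{z. dist z y < R} \<subseteq> cbox (y - (R, R)) (y + (R, R))"
  proof
    fix z :: "real \<times> real" assume "z \<in> {z. dist z y < R}"
    then have "\<bar>fst z - fst y\<bar> \<le> R" "\<bar>snd z - snd y\<bar> \<le> R"
      using dist_fst_le[of z y] dist_snd_le[of z y] by (auto simp: dist_real_def)
    then show "z \<in> cbox (y - (R, R)) (y + (R, R))"
      by (cases z, cases y) (auto simp: cbox_Pair_eq)
  qed
  then have "emeasure lborel {z. dist z y < R} \<le> emeasure lborel (cbox (y - (R, R)) (y + (R, R)))"
    by (intro emeasure_mono) auto
  also have "\<dots> = ennreal (4 * R^2)"
    using assms by (cases y) (simp add: emeasure_lborel_cbox_eq Basis_prod_def inner_prod_def
        power2_eq_square prod_ennreal)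
  finally show ?thesis .
qed

locale uniform_points =
  fixes D :: "(real \<times> real) set" and lam :: real
  assumes lam_pos: "lam > 0" and D_sets: "D \<in> sets lborel"
    and D_area: "emeasure lborel D = ennreal (1 / lam)"
begin

definition unif :: "(real \<times> real) measure" where
  "unif = uniform_measure lborel D"

definition configs :: "nat \<Rightarrow> (nat \<Rightarrow> real \<times> real) measure" where
  "configs N = PiM {..<N} (\<lambda>_. unif)"

lemma prob_space_unif: "prob_space unif"
  unfolding unif_def using lam_pos D_area by (intro prob_space_uniform_measure) auto

lemma space_unif [simp]: "space unif = UNIV"
  by (simp add: unif_def)

lemma sets_unif [simp, measurable_cong]: "sets unif = sets borel"
  by (simp add: unif_def)

lemma prob_space_configs: "prob_space (configs N)"
  unfolding configs_def using prob_space_unif by (intro prob_space_PiM) auto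

lemma emeasure_unif: "B \<in> sets borel \<Longrightarrow> emeasure unif B = emeasure lborel (D \<inter> B) * ennreal lam"
  unfolding unif_def using lam_pos D_sets D_area by (simp add: divide_ennreal_def inverse_ennreal)

lemma emeasure_unif_singleton: "emeasure unif {y} = 0"
  using emeasure_mono[of "D \<inter> {y}" "{y}" lborel] by (simp add: emeasure_unif)

lemma emeasure_unif_ball_le:
  assumes "R \<ge> 0"
  shows "emeasure unif {z. dist z y < R} \<le> ennreal (4 * lam * R^2)"
proof -
  have "emeasure unif {z. dist z y < R} = emeasure lborel (D \<inter> {z. dist z y < R}) * ennreal lam"
    by (rule emeasure_unif) measurable
  also have "\<dots> \<le> emeasure lborel {z. dist z y < R} * ennreal lam"
    by (intro mult_right_mono emeasure_mono) auto
  also have "\<dots> \<le> ennreal (4 * R^2) * ennreal lam"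
    by (intro mult_right_mono emeasure_lborel_ball_le assms) auto
  also have "\<dots> = ennreal (4 * lam * R^2)"
    using lam_pos by (simp add: ennreal_mult'[symmetric] mult_ac)
  finally show ?thesis .
qed

lemma measurable_component: "i < N \<Longrightarrow> (\<lambda>x. x i) \<in> borel_measurable (configs N)"
  unfolding configs_def by (subst measurable_cong_sets[OF refl sets_unif[symmetric]]) simp

lemma measurable_unif_pair:
  "case_prod F \<in> borel_measurable (borel \<Otimes>\<^sub>M borel) \<Longrightarrow> case_prod F \<in> borel_measurable (unif \<Otimes>\<^sub>M unif)"
  using measurable_cong_sets[OF sets_pair_measure_cong[OF sets_unif sets_unif] refl] by blast

text \<open>Given the position of player \<open>j\<close>, the other positions are independent, so a product of
  factors depending on \<open>x i\<close> and \<open>x j\<close> integrates factor by factor.\<close>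

lemma nn_integral_configs_star_le:
  assumes j: "j < N"
    and g: "\<And>i. case_prod (g i) \<in> borel_measurable (borel \<Otimes>\<^sub>M borel)"
    and c: "\<And>i y. i \<in> {..<N} - {j} \<Longrightarrow> (\<integral>\<^sup>+z. g i z y \<partial>unif) \<le> c i"
  shows "(\<integral>\<^sup>+x. (\<Prod>i\<in>{..<N} - {j}. g i (x i) (x j)) \<partial>configs N) \<le> (\<Prod>i\<in>{..<N} - {j}. c i)"
proof -
  interpret prob_space unif by (rule prob_space_unif)
  have eq: "configs N = PiM (insert j ({..<N} - {j})) (\<lambda>_. unif)"
    unfolding configs_def using j by (simp add: insert_absorb)
  have "(\<integral>\<^sup>+x. (\<Prod>i\<in>{..<N} - {j}. g i (x i) (x j)) \<partial>configs N)
      = (\<integral>\<^sup>+y. (\<Prod>i\<in>{..<N} - {j}. \<integral>\<^sup>+z. g i z y \<partial>unif) \<partial>unif)"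
    unfolding eq by (rule nn_integral_PiM_star) (use prob_space_unif measurable_unif_pair[OF g] in auto)
  also have "\<dots> \<le> (\<integral>\<^sup>+y. (\<Prod>i\<in>{..<N} - {j}. c i) \<partial>unif)"
    using c by (intro nn_integral_mono prod_mono_ennreal) auto
  also have "\<dots> = (\<Prod>i\<in>{..<N} - {j}. c i)" using emeasure_space_1 by simp
  finally show ?thesis .
qed

lemma emeasure_coincidence:
  assumes "i < N" "j < N" "i \<noteq> j"
  shows "emeasure (configs N) {x\<in>space (configs N). x i = x j} = 0"
proof -
  note measurable_component [measurable]
  define g where "g k z y = (if k = i \<and> 0 < dist z y then 0 else 1 :: ennreal)" for k and z y :: "real \<times> real"
  have g_meas: "case_prod (g k) \<in> borel_measurable (borel \<Otimes>\<^sub>M borel)" for k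
    unfolding g_def by measurable
  have "(\<integral>\<^sup>+z. g k z y \<partial>unif) \<le> (if k = i then 0 else 1)" for k y
  proof (cases "k = i")
    case True
    then have "(\<integral>\<^sup>+z. g k z y \<partial>unif) = (\<integral>\<^sup>+z. indicator {y} z \<partial>unif)"
      by (intro nn_integral_cong) (simp add: g_def indicator_def)
    also have "\<dots> = emeasure unif {y}" by (rule nn_integral_indicator) simp
    finally show ?thesis using True emeasure_unif_singleton by simp
  next
    case False
    then show ?thesis using prob_space.emeasure_space_1[OF prob_space_unif] by (simp add: g_def)
  qed
  then have "(\<integral>\<^sup>+x. (\<Prod>k\<in>{..<N} - {j}. g k (x k) (x j)) \<partial>configs N) \<le> 0"
    using nn_integral_configs_star_le[OF assms(2) g_meas, where c = "\<lambda>k. if k = i then 0 else 1"] assms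
    by (simp add: prod.If_cases)
  moreover have "(\<Prod>k\<in>{..<N} - {j}. g k (x k) (x j)) = indicator {x. x i = x j} x" for x
  proof -
    have "(\<Prod>k\<in>{..<N} - {j}. g k (x k) (x j)) = (\<Prod>k\<in>{..<N} - {j}. if k = i then g i (x i) (x j) else 1)"
      by (intro prod.cong) (auto simp: g_def)
    then show ?thesis using assms by (simp add: prod.delta g_def indicator_def)
  qed
  ultimately have zero: "(\<integral>\<^sup>+x. indicator {x. x i = x j} x \<partial>configs N) = 0" by simp
  have "emeasure (configs N) {x\<in>space (configs N). x i = x j}
      = (\<integral>\<^sup>+x. indicator {x\<in>space (configs N). x i = x j} x \<partial>configs N)"
    using assms by (intro nn_integral_indicator[symmetric]) measurable
  also have "\<dots> = (\<integral>\<^sup>+x. indicator {x. x i = x j} x \<partial>configs N)"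
    by (intro nn_integral_cong) (simp add: indicator_def)
  finally show ?thesis using zero by simp
qed

lemma emeasure_outside:
  assumes "m < N"
  shows "emeasure (configs N) {x\<in>space (configs N). x m \<notin> D} = 0"
proof -
  interpret product_prob_space "\<lambda>_. unif" "{..<N}"
    using prob_space_unif by (intro product_prob_spaceI) auto
  have "- D \<in> sets unif" using D_sets by simp
  then have "emeasure (configs N) {x\<in>space (configs N). x m \<in> - D} = emeasure unif (- D)"
    unfolding configs_def using assms by (intro emeasure_PiM_Collect_single) auto
  also have "\<dots> = 0" using D_sets by (simp add: emeasure_unif)
  finally show ?thesis by simp
qed

lemma measurable_close_count:
  assumes "j < N"
  shows "(\<lambda>x. real (card {i\<in>{..<N} - {j}. dist (x i) (x j) < r})) \<in> borel_measurable (configs N)"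
proof -
  have "(\<lambda>x. of_bool (dist (x i) (x j) < r) :: real) \<in> borel_measurable (configs N)" if "i < N" for i
  proof -
    have "(\<lambda>x. dist (x i) (x j)) \<in> borel_measurable (configs N)"
      using measurable_component[OF that] measurable_component[OF assms] by (rule borel_measurable_dist)
    then show ?thesis by measurable
  qed
  then have sum_meas: "(\<lambda>x. \<Sum>i\<in>{..<N} - {j}. of_bool (dist (x i) (x j) < r) :: real)
      \<in> borel_measurable (configs N)"
    by (intro borel_measurable_sum) auto
  have eq: "(\<lambda>x. real (card {i\<in>{..<N} - {j}. dist (x i) (x j) < r}))
      = (\<lambda>x. \<Sum>i\<in>{..<N} - {j}. of_bool (dist (x i) (x j) < r))"
    by (rule ext, rule real_card_filter_eq_sum) simp
  show ?thesis by (subst eq) (rule sum_meas)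
qed

lemma nn_integral_exp_close_le:
  assumes "r \<ge> 0"
  shows "(\<integral>\<^sup>+z. (if dist z y < r then ennreal (exp 1) else 1) \<partial>unif) \<le> ennreal (exp (8 * lam * r^2))"
proof -
  interpret prob_space unif by (rule prob_space_unif)
  have e: "0 \<le> exp (1::real) - 1" "exp (1::real) - 1 \<le> 2" using exp_ge_add_one_self[of 1] exp_le by auto
  have e1: "ennreal (exp 1) = 1 + ennreal (exp 1 - 1)" using ennreal_plus[of 1 "exp 1 - 1"] e by simp
  have "(\<integral>\<^sup>+z. (if dist z y < r then ennreal (exp 1) else 1) \<partial>unif)
      = (\<integral>\<^sup>+z. 1 + ennreal (exp 1 - 1) * indicator {z. dist z y < r} z \<partial>unif)"
    using e1 by (intro nn_integral_cong) (simp add: indicator_def)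
  also have "\<dots> = (\<integral>\<^sup>+z. 1 \<partial>unif) + (\<integral>\<^sup>+z. ennreal (exp 1 - 1) * indicator {z. dist z y < r} z \<partial>unif)"
    by (rule nn_integral_add) measurable
  also have "\<dots> = 1 + ennreal (exp 1 - 1) * emeasure unif {z. dist z y < r}"
    using emeasure_space_1 by (simp add: nn_integral_cmult_indicator)
  also have "\<dots> \<le> 1 + ennreal (exp 1 - 1) * ennreal (4 * lam * r^2)"
    by (intro add_left_mono mult_left_mono emeasure_unif_ball_le assms) auto
  also have "\<dots> = ennreal (1 + (exp 1 - 1) * (4 * lam * r^2))"
    using e lam_pos by (simp add: ennreal_mult ennreal_plus)
  also have "\<dots> \<le> ennreal (exp (8 * lam * r^2))"
  proof (intro ennreal_leI)
    have "1 + (exp 1 - 1) * (4 * lam * r^2) \<le> 1 + 2 * (4 * lam * r^2)"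
      using e lam_pos by (intro add_left_mono mult_right_mono) auto
    also have "\<dots> \<le> exp (2 * (4 * lam * r^2))" by (rule exp_ge_add_one_self)
    finally show "1 + (exp 1 - 1) * (4 * lam * r^2) \<le> exp (8 * lam * r^2)" by (simp add: mult.assoc)
  qed
  finally show ?thesis .
qed

lemma nn_integral_exp_close_count_le:
  assumes j: "j < N" and r: "r \<ge> 0"
  shows "(\<integral>\<^sup>+x. ennreal (exp (real (card {i\<in>{..<N} - {j}. dist (x i) (x j) < r}))) \<partial>configs N)
    \<le> ennreal (exp (8 * lam * r^2 * real N))"
proof -
  define g where "g z y = (if dist z y < r then ennreal (exp 1) else 1)" for z y :: "real \<times> real"
  have g_eq: "g z y = ennreal (exp (of_bool (dist z y < r)))" for z y by (simp add: g_def of_bool_def)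
  have "(\<Prod>i\<in>{..<N} - {j}. g (x i) (x j))
      = ennreal (exp (real (card {i\<in>{..<N} - {j}. dist (x i) (x j) < r})))" for x
  proof -
    have "(\<Prod>i\<in>{..<N} - {j}. g (x i) (x j))
        = ennreal (\<Prod>i\<in>{..<N} - {j}. exp (of_bool (dist (x i) (x j) < r)))"
      using g_eq by (simp add: prod_ennreal)
    also have "(\<Prod>i\<in>{..<N} - {j}. exp (of_bool (dist (x i) (x j) < r)))
        = exp (\<Sum>i\<in>{..<N} - {j}. of_bool (dist (x i) (x j) < r))"
      by (simp only: exp_sum finite_Diff finite_lessThan)
    also have "(\<Sum>i\<in>{..<N} - {j}. of_bool (dist (x i) (x j) < r))
        = real (card {i\<in>{..<N} - {j}. dist (x i) (x j) < r})"
      by (rule real_card_filter_eq_sum[symmetric]) simp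
    finally show ?thesis .
  qed
  then have "(\<integral>\<^sup>+x. ennreal (exp (real (card {i\<in>{..<N} - {j}. dist (x i) (x j) < r}))) \<partial>configs N)
      = (\<integral>\<^sup>+x. (\<Prod>i\<in>{..<N} - {j}. g (x i) (x j)) \<partial>configs N)" by (simp only:)
  also have "\<dots> \<le> (\<Prod>i\<in>{..<N} - {j}. ennreal (exp (8 * lam * r^2)))"
    using nn_integral_exp_close_le[OF r] by (intro nn_integral_configs_star_le[OF j]) (auto simp: g_def)
  also have "\<dots> = ennreal (exp (real (card ({..<N} - {j})) * (8 * lam * r^2)))"
    by (simp only: prod_constant ennreal_power exp_ge_zero exp_of_nat_mult)
  also have "\<dots> \<le> ennreal (exp (real N * (8 * lam * r^2)))"
  proof -
    have "card ({..<N} - {j}) \<le> N" using card_mono[of "{..<N}" "{..<N} - {j}"] by simp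
    then have "real (card ({..<N} - {j})) * (8 * lam * r^2) \<le> real N * (8 * lam * r^2)"
      using lam_pos by (intro mult_right_mono) auto
    then show ?thesis by (intro ennreal_leI) simp
  qed
  also have "\<dots> = ennreal (exp (8 * lam * r^2 * real N))" by (simp add: mult.commute)
  finally show ?thesis .
qed

text \<open>Chernoff bound: Markov's inequality for the exponential moment above.\<close>

lemma emeasure_crowded_le:
  assumes j: "j < N" and r: "r \<ge> 0"
  shows "emeasure (configs N) {x\<in>space (configs N). t < real (card {i\<in>{..<N} - {j}. dist (x i) (x j) < r})}
    \<le> ennreal (exp (8 * lam * r^2 * real N - t))"
proof -
  define count where "count x = real (card {i\<in>{..<N} - {j}. dist (x i) (x j) < r})" for x :: "nat \<Rightarrow> real \<times> real"
  have count_meas [measurable]: "count \<in> borel_measurable (configs N)"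
    unfolding count_def by (rule measurable_close_count[OF j])
  have "{x\<in>space (configs N). t < count x}
      \<subseteq> {x\<in>space (configs N). 1 \<le> ennreal (exp (- t)) * ennreal (exp (count x))}"
  proof safe
    fix x assume "t < count x"
    then have "1 \<le> exp (- t) * exp (count x)" by (simp flip: exp_add)
    then show "1 \<le> ennreal (exp (- t)) * ennreal (exp (count x))" by (simp flip: ennreal_mult)
  qed
  then have "emeasure (configs N) {x\<in>space (configs N). t < count x}
      \<le> emeasure (configs N) {x\<in>space (configs N). 1 \<le> ennreal (exp (- t)) * ennreal (exp (count x))}"
    by (rule emeasure_mono) measurable
  also have "\<dots> \<le> ennreal (exp (- t))
      * (\<integral>\<^sup>+x. ennreal (exp (count x)) * indicator (space (configs N)) x \<partial>configs N)"
    by (rule nn_integral_Markov_inequality) measurable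
  also have "(\<integral>\<^sup>+x. ennreal (exp (count x)) * indicator (space (configs N)) x \<partial>configs N)
      = (\<integral>\<^sup>+x. ennreal (exp (count x)) \<partial>configs N)"
    by (rule nn_integral_cong) simp
  also have "ennreal (exp (- t)) * \<dots> \<le> ennreal (exp (- t)) * ennreal (exp (8 * lam * r^2 * real N))"
    using nn_integral_exp_close_count_le[OF j r] unfolding count_def by (rule mult_left_mono) simp
  also have "\<dots> = ennreal (exp (8 * lam * r^2 * real N - t))"
    by (simp flip: ennreal_mult exp_add)
  finally show ?thesis unfolding count_def .
qed

end

section \<open>The random network\<close>

lemma powr_balance:
  fixes x alpha :: real
  assumes "x > 0" "alpha > 0"
  shows "sqrt (x powr (alpha / (alpha + 2))) powr (- alpha) * x powr (alpha / 2) = x powr (alpha / (alpha + 2))"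
proof -
  have "sqrt (x powr (alpha / (alpha + 2))) powr (- alpha) = x powr (- (alpha * (alpha / (alpha + 2) / 2)))"
    using assms by (simp add: powr_half_sqrt[symmetric] powr_powr mult.commute)
  also have "\<dots> * x powr (alpha / 2) = x powr (- (alpha * (alpha / (alpha + 2) / 2)) + alpha / 2)"
    by (rule powr_add[symmetric])
  also have "- (alpha * (alpha / (alpha + 2) / 2)) + alpha / 2 = alpha / (alpha + 2)"
    using assms by (simp add: field_simps)
  finally show ?thesis .
qed

lemma ln_div_self_bounds:
  assumes "N \<ge> 3"
  shows "1 / real N \<le> ln (real N) / real N" "ln (real N) / real N \<le> 1"
proof -
  have "ln (exp 1) \<le> ln (real N)" using assms exp_le by (subst ln_le_cancel_iff) auto
  then show "1 / real N \<le> ln (real N) / real N" using assms by (intro divide_right_mono) auto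
  have "ln (real N) \<le> real N - 1" using assms by (intro ln_le_minus_one) auto
  then show "ln (real N) / real N \<le> 1" using assms by simp
qed

locale random_network = uniform_points D lam
  for D :: "(real \<times> real) set" and lam :: real +
  fixes alpha G P0 N0 smax eps :: real and S :: nat
    and d :: "nat \<Rightarrow> nat \<Rightarrow> nat" and l :: "nat \<Rightarrow> nat"
    and P :: "nat \<Rightarrow> (nat \<Rightarrow> real \<times> real) \<Rightarrow> nat \<Rightarrow> real"
    and net_of :: "nat \<Rightarrow> (nat \<Rightarrow> real \<times> real) \<Rightarrow> net"
  assumes alpha_pos: "alpha > 0" and G_pos: "G > 0" and P0_pos: "P0 > 0" and N0_pos: "N0 > 0"
    and eps_pos: "eps > 0"
    and nP_net_of: "\<And>N x. nP (net_of N x) = N"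
    and nK_net_of: "\<And>N x. nK (net_of N x) = N div l N"
    and dst_net_of: "\<And>N x. dst (net_of N x) = d N"
    and pos_net_of: "\<And>N x. pos (net_of N x) = x"
    and pw_net_of: "\<And>N x. pw (net_of N x) = P N x"
    and noise_net_of: "\<And>N x. noise (net_of N x) = N0"
    and gG_net_of: "\<And>N x. gG (net_of N x) = G"
    and alph_net_of: "\<And>N x. alph (net_of N x) = alpha"
    and d_valid: "\<And>N n. N \<ge> 2 \<Longrightarrow> n < N \<Longrightarrow> d N n < N \<and> d N n \<noteq> n"
    and d_fibre_card: "\<And>N p. N \<ge> 2 \<Longrightarrow> p < N \<Longrightarrow> card {n. n < N \<and> d N n = p} \<le> S"
    and l_valid: "\<And>N. N \<ge> 2 \<Longrightarrow> l N \<ge> 1 \<and> l N dvd N"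
    and l_lim: "(\<lambda>N. real (l N) * (ln (real N) / real N) powr (alpha / (alpha + 2))) \<longlonglongrightarrow> 0"
    and P_valid: "\<And>N x n. N \<ge> 2 \<Longrightarrow> (\<forall>m<N. x m \<in> D) \<Longrightarrow> n < N \<Longrightarrow>
      0 < P N x n \<and> P N x n \<le> P0 * (ln (real N) / real N) powr (alpha / 2)"
    and snr_bounded: "\<And>N x n. N \<ge> 2 \<Longrightarrow> (\<forall>m<N. x m \<in> D) \<Longrightarrow> inj_on x {..<N} \<Longrightarrow> n < N \<Longrightarrow>
      gain (net_of N x) n (d N n) * P N x n / N0 \<le> smax"
begin

lemmas net_of_simps [simp] = nP_net_of nK_net_of dst_net_of pos_net_of pw_net_of noise_net_of
  gG_net_of alph_net_of

text \<open>The scale \<open>spread N = (ln N / N)^(alpha/(alpha+2))\<close> balances the two sources of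
  interference: within the radius \<open>sqrt (spread N)\<close> a player has about \<open>lam * N * spread N\<close>
  neighbours, and beyond it the received power of every transmitter is at most \<open>G * P0 * spread N\<close>.\<close>

definition spread :: "nat \<Rightarrow> real" where
  "spread N = (ln (real N) / real N) powr (alpha / (alpha + 2))"

definition radius :: "nat \<Rightarrow> real" where
  "radius N = sqrt (spread N)"

definition crowd_bound :: "nat \<Rightarrow> real" where
  "crowd_bound N = 8 * lam * real N * spread N + 2 * ln (real N)"

definition Pmax :: "nat \<Rightarrow> real" where
  "Pmax N = P0 * (ln (real N) / real N) powr (alpha / 2)"

definition far_gain :: "nat \<Rightarrow> real" where
  "far_gain N = G * radius N powr (- alpha)"

definition atypical :: "nat \<Rightarrow> (nat \<Rightarrow> real \<times> real) set" where
  "atypical N = (\<Union>m<N. {x\<in>space (configs N). x m \<notin> D})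
     \<union> (\<Union>i<N. \<Union>j\<in>{..<N} - {i}. {x\<in>space (configs N). x i = x j})
     \<union> (\<Union>j<N. {x\<in>space (configs N).
          crowd_bound N < real (card {i\<in>{..<N} - {j}. dist (x i) (x j) < radius N})})"

definition typical :: "nat \<Rightarrow> (nat \<Rightarrow> real \<times> real) set" where
  "typical N = space (configs N) - atypical N"

text \<open>The two budgets of \<open>expected_sumrate_gain_ge\<close> per unit of \<open>N * spread N\<close>, using
  \<open>crowd_bound N \<le> (8 * lam + 2) * N * spread N\<close>.\<close>

definition channel_const :: real where
  "channel_const = 1 + (8 * lam + 2) + G * P0 / (eps * N0 * ln 2 / 2)"

definition loss_const :: real where
  "loss_const = real S * \<bar>log 2 (1 + smax)\<bar> * (1 + (8 * lam + 2)) + G * P0 / (N0 * ln 2)"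

definition large :: "nat \<Rightarrow> bool" where
  "large N \<longleftrightarrow> N \<ge> 3 \<and> real (l N) * spread N * channel_const \<le> 1 / 2
     \<and> real (l N) * spread N * loss_const \<le> eps / 8"

lemma eventually_large: "eventually large sequentially"
proof -
  have lim: "(\<lambda>N. real (l N) * spread N * c) \<longlonglongrightarrow> 0" for c
    using l_lim unfolding spread_def by (rule tendsto_mult_left_zero)
  have "eventually (\<lambda>N. real (l N) * spread N * channel_const < 1 / 2) sequentially"
    by (rule order_tendstoD(2)[OF lim]) simp
  moreover have "eventually (\<lambda>N. real (l N) * spread N * loss_const < eps / 8) sequentially"
    using eps_pos by (intro order_tendstoD(2)[OF lim]) simp
  ultimately show ?thesis
    using eventually_ge_at_top[of 3] unfolding large_def by eventually_elim auto
qed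

lemma spread_bounds:
  assumes "N \<ge> 3"
  shows "0 < spread N" "1 \<le> real N * spread N" "ln (real N) \<le> real N * spread N"
proof -
  define x where "x = ln (real N) / real N"
  have x: "1 / real N \<le> x" "x \<le> 1" "0 < x"
    using ln_div_self_bounds[OF assms] assms unfolding x_def by (auto intro: less_le_trans)
  have "x \<le> spread N"
    using x alpha_pos powr_mono'[of "alpha / (alpha + 2)" 1 x] unfolding spread_def x_def[symmetric] by simp
  then show "1 \<le> real N * spread N" "ln (real N) \<le> real N * spread N"
    using x assms unfolding x_def by (auto simp: field_simps)
  show "0 < spread N" using x(3) unfolding spread_def x_def[symmetric] by simp
qed

lemma far_gain_mult_Pmax:
  assumes "N \<ge> 3"
  shows "far_gain N * Pmax N = G * P0 * spread N"
  using powr_balance[OF _ alpha_pos, of "ln (real N) / real N"] ln_div_self_bounds[OF assms] assms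
  unfolding far_gain_def Pmax_def radius_def spread_def by (simp add: mult_ac)

lemma crowd_bound_bounds:
  assumes "N \<ge> 3"
  shows "0 \<le> crowd_bound N" "crowd_bound N \<le> real N * spread N * (8 * lam + 2)"
  using spread_bounds[OF assms] lam_pos assms unfolding crowd_bound_def by (auto simp: algebra_simps)

lemma large_budgets:
  assumes "large N"
  shows "1 + crowd_bound N + real N * far_gain N * Pmax N / (eps * N0 * ln 2 / 2) \<le> real (N div l N) / 2"
    and "real S * log 2 (1 + smax) + real S * log 2 (1 + smax) * crowd_bound N
      + real N * far_gain N * Pmax N / (N0 * ln 2) \<le> real (N div l N) / 2 * (eps / 4)"
proof -
  have N: "N \<ge> 3" using assms by (simp add: large_def)
  define Y where "Y = real N * spread N"
  have Y: "1 \<le> Y" "crowd_bound N \<le> Y * (8 * lam + 2)" "0 \<le> crowd_bound N"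
    using spread_bounds[OF N] crowd_bound_bounds[OF N] unfolding Y_def by auto
  have WP: "real N * far_gain N * Pmax N = Y * (G * P0)"
    unfolding Y_def using far_gain_mult_Pmax[OF N] by (simp add: mult_ac)
  have K: "real (N div l N) = Y / (real (l N) * spread N)"
    using l_valid[of N] N spread_bounds[OF N] unfolding Y_def by (simp add: real_of_nat_div field_simps)
  have lq: "0 < real (l N) * spread N" using l_valid[of N] N spread_bounds[OF N] by simp
  have "1 + crowd_bound N + real N * far_gain N * Pmax N / (eps * N0 * ln 2 / 2) \<le> Y * channel_const"
    using Y unfolding WP channel_const_def by (simp add: algebra_simps)
  also have "\<dots> \<le> real (N div l N) / 2"
    using assms lq Y unfolding K large_def by (simp add: field_simps)
  finally show "1 + crowd_bound N + real N * far_gain N * Pmax N / (eps * N0 * ln 2 / 2) \<le> real (N div l N) / 2" .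
  let ?c = "real S * \<bar>log 2 (1 + smax)\<bar>"
  have c: "real S * log 2 (1 + smax) \<le> ?c" by (simp add: mult_left_mono)
  have "?c \<le> ?c * Y" using mult_left_mono[OF Y(1), of ?c] by simp
  then have c1: "real S * log 2 (1 + smax) \<le> ?c * Y" using c by linarith
  have "real S * log 2 (1 + smax) * crowd_bound N \<le> ?c * crowd_bound N"
    using c Y(3) by (rule mult_right_mono)
  also have "\<dots> \<le> ?c * (Y * (8 * lam + 2))" using Y(2) by (intro mult_left_mono) simp_all
  finally have "real S * log 2 (1 + smax) + real S * log 2 (1 + smax) * crowd_bound N
      \<le> ?c * Y + ?c * (Y * (8 * lam + 2))"
    using c1 by (intro add_mono)
  then have "real S * log 2 (1 + smax) + real S * log 2 (1 + smax) * crowd_bound N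
      + real N * far_gain N * Pmax N / (N0 * ln 2) \<le> Y * loss_const"
    unfolding WP loss_const_def by (simp add: algebra_simps)
  also have "\<dots> \<le> real (N div l N) / 2 * (eps / 4)"
    using assms lq Y unfolding K large_def by (simp add: field_simps)
  finally show "real S * log 2 (1 + smax) + real S * log 2 (1 + smax) * crowd_bound N
      + real N * far_gain N * Pmax N / (N0 * ln 2) \<le> real (N div l N) / 2 * (eps / 4)" .
qed

lemma typicalD:
  assumes "x \<in> typical N"
  shows "\<forall>m<N. x m \<in> D" "inj_on x {..<N}"
    and "\<And>j. j < N \<Longrightarrow> real (card {i\<in>{..<N} - {j}. dist (x i) (x j) < radius N}) \<le> crowd_bound N"
  using assms unfolding typical_def atypical_def by (auto intro!: inj_onI simp: not_less)

lemma gain_net_of: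
  "gain (net_of N x) m j = G * dist (x m) (x j) powr (- alpha)
     * (if in_beam (thT (net_of N x)) (phiT (net_of N x) m) (x m) (x j)
           \<and> in_beam (thR (net_of N x)) (phiR (net_of N x) j) (x j) (x m) then 1 else 0)"
  by (simp add: gain_def)

lemma sparse_game_net_of:
  assumes N: "N \<ge> 3" and x: "x \<in> typical N"
  shows "sparse_game (net_of N x) S (Pmax N) smax (radius N) (crowd_bound N) (far_gain N)"
proof unfold_locales
  note inD = typicalD(1)[OF x] and N2 = le_trans[OF _ N, of 2, simplified]
  show "0 < noise (net_of N x)" using N0_pos by simp
  show "m < nP (net_of N x) \<Longrightarrow> dst (net_of N x) m < nP (net_of N x) \<and> dst (net_of N x) m \<noteq> m" for m
    using d_valid[OF N2] by simp
  show "m < nP (net_of N x) \<Longrightarrow> 0 < pw (net_of N x) m" for m using P_valid[OF N2 inD] by simp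
  show "0 \<le> gain (net_of N x) m j" for m j using G_pos by (simp add: gain_net_of)
  show "gain (net_of N x) j j = 0" for j
    \<comment> \<open>as \<open>0 powr a = 0\<close>; the model's infinite self-gain is accounted for in \<open>rate\<close> instead\<close>
    by (simp add: gain_net_of)
  show "j < nP (net_of N x) \<Longrightarrow> card {m. m < nP (net_of N x) \<and> dst (net_of N x) m = j} \<le> S" for j
    using d_fibre_card[OF N2] by simp
  show "m < nP (net_of N x) \<Longrightarrow> pw (net_of N x) m \<le> Pmax N" for m
    using P_valid[OF N2 inD] by (simp add: Pmax_def)
  show "m < nP (net_of N x) \<Longrightarrow> gain (net_of N x) m (dst (net_of N x) m) * pw (net_of N x) m
      / noise (net_of N x) \<le> smax" for m
    using snr_bounded[OF N2 inD typicalD(2)[OF x]] by simp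
  show "j < nP (net_of N x) \<Longrightarrow> real (card (neighbours (net_of N x) (radius N) j)) \<le> crowd_bound N" for j
    using typicalD(3)[OF x, of j] unfolding neighbours_def by (simp add: conj_commute)
  show "0 \<le> far_gain N" using G_pos by (simp add: far_gain_def)
  show "gain (net_of N x) m j \<le> far_gain N"
    if "m < nP (net_of N x)" "j < nP (net_of N x)" "radius N \<le> dist (pos (net_of N x) m) (pos (net_of N x) j)" for m j
  proof -
    have "0 < radius N" using spread_bounds(1)[OF N] by (simp add: radius_def)
    then have "dist (x m) (x j) powr (- alpha) \<le> radius N powr (- alpha)"
      using that alpha_pos by (intro powr_mono2') auto
    then show ?thesis using G_pos by (simp add: gain_net_of far_gain_def)
  qed
qed

lemma expected_sumrate_gain_typical:
  assumes "large N" "x \<in> typical N" "profile (net_of N x) a" "n < N" "a n \<notin> best_set (net_of N x) eps a n"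
  shows "measure_pmf.expectation (pmf_of_set (best_set (net_of N x) (eps / 2) a n))
    (\<lambda>k. sumrate (net_of N x) (a(n := k)) - sumrate (net_of N x) a) \<ge> eps / 4"
proof -
  have N: "N \<ge> 3" using assms(1) by (simp add: large_def)
  interpret sparse_game "net_of N x" S "Pmax N" smax "radius N" "crowd_bound N" "far_gain N"
    by (rule sparse_game_net_of[OF N assms(2)])
  show ?thesis using large_budgets[OF assms(1)] eps_pos assms(3-5)
    by (intro expected_sumrate_gain_ge) (simp_all add: mult.assoc)
qed

lemma sets_outside:
  assumes "m < N"
  shows "{x\<in>space (configs N). x m \<notin> D} \<in> sets (configs N)"
proof -
  have "(\<lambda>x. x m) -` (- D) \<inter> space (configs N) \<in> sets (configs N)"
    using D_sets by (intro measurable_sets[OF measurable_component[OF assms]]) simp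
  moreover have "(\<lambda>x. x m) -` (- D) \<inter> space (configs N) = {x\<in>space (configs N). x m \<notin> D}" by auto
  ultimately show ?thesis by simp
qed

lemma sets_coincidence:
  assumes "i < N" "j < N"
  shows "{x\<in>space (configs N). x i = x j} \<in> sets (configs N)"
proof -
  have "(\<lambda>x. dist (x i) (x j)) \<in> borel_measurable (configs N)"
    using measurable_component[OF assms(1)] measurable_component[OF assms(2)] by (rule borel_measurable_dist)
  then have "(\<lambda>x. dist (x i) (x j)) -` {0} \<inter> space (configs N) \<in> sets (configs N)"
    by (rule measurable_sets) simp
  moreover have "(\<lambda>x. dist (x i) (x j)) -` {0} \<inter> space (configs N) = {x\<in>space (configs N). x i = x j}" by auto
  ultimately show ?thesis by simp
qed

lemma sets_crowded:
  assumes "j < N"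
  shows "{x\<in>space (configs N). c < real (card {i\<in>{..<N} - {j}. dist (x i) (x j) < r})} \<in> sets (configs N)"
  using measurable_close_count[OF assms, of r] by measurable

lemma sets_atypical: "atypical N \<in> sets (configs N)"
  unfolding atypical_def
  by (intro sets.Un sets.finite_UN finite_lessThan finite_Diff sets_outside sets_coincidence sets_crowded) auto

lemma emeasure_crowded_radius_le:
  assumes N: "N \<ge> 3" and j: "j < N"
  shows "emeasure (configs N) {x\<in>space (configs N).
      crowd_bound N < real (card {i\<in>{..<N} - {j}. dist (x i) (x j) < radius N})} \<le> ennreal (1 / real N ^ 2)"
proof -
  have "0 \<le> radius N" by (simp add: radius_def spread_def)
  then have "emeasure (configs N) {x\<in>space (configs N).
      crowd_bound N < real (card {i\<in>{..<N} - {j}. dist (x i) (x j) < radius N})}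
      \<le> ennreal (exp (8 * lam * radius N ^ 2 * real N - crowd_bound N))"
    by (rule emeasure_crowded_le[OF j])
  also have "8 * lam * radius N ^ 2 * real N - crowd_bound N = - (2 * ln (real N))"
    using spread_bounds(1)[OF N] unfolding crowd_bound_def radius_def by simp
  also have "exp (- (2 * ln (real N))) = 1 / real N ^ 2"
    using N exp_of_nat_mult[of 2 "ln (real N)"] by (simp add: exp_minus inverse_eq_divide)
  finally show ?thesis .
qed

lemma emeasure_atypical_le:
  assumes N: "N \<ge> 3"
  shows "emeasure (configs N) (atypical N) \<le> ennreal (1 / real N)"
proof -
  let ?A = "\<lambda>m. {x\<in>space (configs N). x m \<notin> D}"
  let ?B = "\<lambda>i j. {x\<in>space (configs N). x i = x j}"
  let ?C = "\<lambda>j. {x\<in>space (configs N). crowd_bound N < real (card {i\<in>{..<N} - {j}. dist (x i) (x j) < radius N})}"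
  have "emeasure (configs N) (\<Union>m<N. ?A m) \<le> (\<Sum>m<N. emeasure (configs N) (?A m))"
    using sets_outside by (intro emeasure_subadditive_finite) auto
  then have A: "emeasure (configs N) (\<Union>m<N. ?A m) = 0" by (simp add: emeasure_outside)
  have "emeasure (configs N) (\<Union>j\<in>{..<N} - {i}. ?B i j) = 0" if "i < N" for i
  proof -
    have "emeasure (configs N) (\<Union>j\<in>{..<N} - {i}. ?B i j) \<le> (\<Sum>j\<in>{..<N} - {i}. emeasure (configs N) (?B i j))"
      using sets_coincidence that by (intro emeasure_subadditive_finite) auto
    then show ?thesis using that by (simp add: emeasure_coincidence)
  qed
  moreover have "emeasure (configs N) (\<Union>i<N. \<Union>j\<in>{..<N} - {i}. ?B i j)
      \<le> (\<Sum>i<N. emeasure (configs N) (\<Union>j\<in>{..<N} - {i}. ?B i j))"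
    using sets_coincidence by (intro emeasure_subadditive_finite) (auto intro!: sets.finite_UN)
  ultimately have B: "emeasure (configs N) (\<Union>i<N. \<Union>j\<in>{..<N} - {i}. ?B i j) = 0" by simp
  have C_sets: "?C j \<in> sets (configs N)" if "j < N" for j by (rule sets_crowded[OF that])
  have "emeasure (configs N) (\<Union>j<N. ?C j) \<le> (\<Sum>j<N. emeasure (configs N) (?C j))"
    by (intro emeasure_subadditive_finite finite_lessThan image_subsetI C_sets) simp
  also have "\<dots> \<le> (\<Sum>j<N. ennreal (1 / real N ^ 2))"
    using emeasure_crowded_radius_le[OF N] by (intro sum_mono) auto
  also have "\<dots> = ennreal (real N * (1 / real N ^ 2))"
    using ennreal_mult[of "real N" "1 / real N ^ 2"] by (simp add: ennreal_of_nat_eq_real_of_nat)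
  also have "real N * (1 / real N ^ 2) = 1 / real N"
    using N by (simp add: power2_eq_square)
  finally have C: "emeasure (configs N) (\<Union>j<N. ?C j) \<le> ennreal (1 / real N)" .
  have "emeasure (configs N) (atypical N)
      \<le> emeasure (configs N) ((\<Union>m<N. ?A m) \<union> (\<Union>i<N. \<Union>j\<in>{..<N} - {i}. ?B i j)) + emeasure (configs N) (\<Union>j<N. ?C j)"
    unfolding atypical_def using sets_outside sets_coincidence
    by (intro emeasure_subadditive sets.Un sets.finite_UN finite_lessThan C_sets) auto
  also have "\<dots> \<le> emeasure (configs N) (\<Union>m<N. ?A m) + emeasure (configs N) (\<Union>i<N. \<Union>j\<in>{..<N} - {i}. ?B i j)
      + emeasure (configs N) (\<Union>j<N. ?C j)"
    using sets_outside sets_coincidence by (intro add_right_mono emeasure_subadditive sets.finite_UN) auto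
  also have "\<dots> \<le> ennreal (1 / real N)" using A B C by simp
  finally show ?thesis .
qed

lemma measure_typical_ge:
  assumes "N \<ge> 3"
  shows "1 - 1 / real N \<le> measure (configs N) (typical N)"
proof -
  interpret prob_space "configs N" by (rule prob_space_configs)
  have "measure (configs N) (atypical N) \<le> 1 / real N"
    using emeasure_atypical_le[OF assms] by (simp add: emeasure_eq_measure)
  then show ?thesis
    unfolding typical_def using sets_atypical by (simp add: prob_compl)
qed

lemma measure_typical_tendsto:
  "(\<lambda>N. measure (configs N) (if large N then typical N else {})) \<longlonglongrightarrow> 1"
proof (rule tendsto_sandwich[of "\<lambda>N. 1 - 1 / real N" _ _ "\<lambda>_. 1"])
  show "eventually (\<lambda>N. 1 - 1 / real N \<le> measure (configs N) (if large N then typical N else {})) sequentially"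
    using eventually_large by eventually_elim (simp add: large_def measure_typical_ge)
  show "eventually (\<lambda>N. measure (configs N) (if large N then typical N else {}) \<le> 1) sequentially"
    by (simp add: prob_space.prob_le_1[OF prob_space_configs])
  show "(\<lambda>N. 1 - 1 / real N) \<longlonglongrightarrow> 1"
    using tendsto_diff[OF tendsto_const lim_inverse_n'] by simp
qed simp

end

theorem mainTheorem6:
  fixes lam alpha G tT tR P0 N0 smax eps :: real
    and S :: nat
    and D :: "(real \<times> real) set"
    and d :: "nat \<Rightarrow> nat \<Rightarrow> nat"
    and l :: "nat \<Rightarrow> nat"
    and pT pR :: "nat \<Rightarrow> nat \<Rightarrow> real"
    and P :: "nat \<Rightarrow> (nat \<Rightarrow> real \<times> real) \<Rightarrow> nat \<Rightarrow> real"
  defines "M \<equiv> (\<lambda>N. PiM {..<N} (\<lambda>_. uniform_measure lborel D))"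
    and "net_of \<equiv> (\<lambda>N x. mk_net G alpha tT tR N0 N (N div l N) (d N) (pT N) (pR N) x (P N x))"
  assumes lam: "lam > 0" and alpha: "alpha > 0" and G: "G > 0"
    and tT: "0 < tT" "tT \<le> 2 * pi" and tR: "0 < tR" "tR \<le> 2 * pi"
    and P0: "P0 > 0" and N0: "N0 > 0" and S: "S \<ge> 1"
    and D_closed: "closed D" and D_area: "emeasure lborel D = ennreal (1 / lam)"
    and d_ok: "\<And>N n. N \<ge> 2 \<Longrightarrow> n < N \<Longrightarrow> d N n < N \<and> d N n \<noteq> n"
    and d_in: "\<And>N p. N \<ge> 2 \<Longrightarrow> p < N \<Longrightarrow> card {n. n < N \<and> d N n = p} \<le> S"
    and l_ok: "\<And>N. N \<ge> 2 \<Longrightarrow> l N \<ge> 1 \<and> l N dvd N"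
    and l_lim: "(\<lambda>N. real (l N) * (ln (real N) / real N) powr (alpha / (alpha + 2))) \<longlonglongrightarrow> 0"
    and P_ok: "\<And>N x n. N \<ge> 2 \<Longrightarrow> (\<forall>m<N. x m \<in> D) \<Longrightarrow> n < N \<Longrightarrow>
               0 < P N x n \<and> P N x n \<le> P0 * (ln (real N) / real N) powr (alpha / 2)"
    and SNR: "\<And>N x n. N \<ge> 2 \<Longrightarrow> (\<forall>m<N. x m \<in> D) \<Longrightarrow> inj_on x {..<N} \<Longrightarrow> n < N \<Longrightarrow>
               gain (net_of N x) n (d N n) * P N x n / N0 \<le> smax"
    and eps: "eps > 0"
  shows
    "(\<exists>E. (\<forall>N. E N \<in> sets (M N) \<and>
           E N \<subseteq> {x. inj_on x {..<N} \<and>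
             (\<forall>a n. profile (net_of N x) a \<and> n < N \<and> a n \<notin> best_set (net_of N x) eps a n \<longrightarrow>
                measure_pmf.expectation (pmf_of_set (best_set (net_of N x) (eps / 2) a n))
                  (\<lambda>k. sumrate (net_of N x) (a(n := k)) - sumrate (net_of N x) a) \<ge> eps / 4)})
        \<and> (\<lambda>N. measure (M N) (E N)) \<longlonglongrightarrow> 1)
     \<and> (\<exists>E. (\<forall>N. E N \<in> sets (M N) \<and>
           E N \<subseteq> {x. inj_on x {..<N} \<and>
             (\<forall>sched. valid_schedule (net_of N x) sched \<and> nondegenerate (net_of N x) eps sched \<longrightarrow>
                (\<forall>t a. profile (net_of N x) a \<longrightarrow>
                   measure_pmf.expectation (br_step (net_of N x) eps sched t a)
                     (\<lambda>a'. sumrate (net_of N x) a' - sumrate (net_of N x) a) \<ge> 0))})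
        \<and> (\<lambda>N. measure (M N) (E N)) \<longlonglongrightarrow> 1)"
proof -
  interpret R: random_network D lam alpha G P0 N0 smax eps S d l P net_of
    using lam D_area borel_closed[OF D_closed] alpha G P0 N0 eps d_ok d_in l_ok l_lim P_ok SNR
    by unfold_locales (simp_all add: net_of_def mk_net_def)
  have M: "M N = R.configs N" for N by (simp add: M_def R.configs_def R.unif_def)
  define E where "E N = (if R.large N then R.typical N else {})" for N
  have E_sets: "E N \<in> sets (M N)" for N
    unfolding E_def M R.typical_def using R.sets_atypical by auto
  have improve: "inj_on x {..<N} \<and> (\<forall>a n. profile (net_of N x) a \<and> n < N \<and> a n \<notin> best_set (net_of N x) eps a n
      \<longrightarrow> measure_pmf.expectation (pmf_of_set (best_set (net_of N x) (eps / 2) a n))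
           (\<lambda>k. sumrate (net_of N x) (a(n := k)) - sumrate (net_of N x) a) \<ge> eps / 4)"
    if "x \<in> E N" for N x
    using that R.typicalD(2) R.expected_sumrate_gain_typical by (auto simp: E_def split: if_splits)
  have drift: "inj_on x {..<N} \<and> (\<forall>sched. valid_schedule (net_of N x) sched \<and> nondegenerate (net_of N x) eps sched
      \<longrightarrow> (\<forall>t a. profile (net_of N x) a \<longrightarrow> measure_pmf.expectation (br_step (net_of N x) eps sched t a)
           (\<lambda>a'. sumrate (net_of N x) a' - sumrate (net_of N x) a) \<ge> 0))"
    if "x \<in> E N" for N x
    using improve[OF that] br_step_drift_nonneg[where g = "net_of N x" and eps = eps] eps by simp
  have "(\<lambda>N. measure (M N) (E N)) \<longlonglongrightarrow> 1"
    unfolding E_def M by (rule R.measure_typical_tendsto)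
  then show ?thesis using E_sets improve drift by (intro conjI exI[of _ E]) auto
qed

end
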